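(* Let $(J,S)$ be a homogeneous $d$-dimensional multi-time Markov renewal chain with semi-Markov kernel $q$. Then for all $i,j\in E$, $$g_{ij}=q_{ij}+\sum_{r\in E,\ r\ne j}q_{ir}*g_{rj}.$$
   Context: $E=\{1,\dots,s\}$. Convolution of real sequences on $\mathbb{N}^d$: $[a*b](k)=\sum_{l+l'=k}a(l)b(l')$. $\mathbb{N}^d$ has the componentwise partial order, $k<l$ meaning $k\le l$, $k\ne l$. A homogeneous $d$-dimensional multi-time Markov renewal chain is a process $(J_n,S_n)_{n\in\mathbb{N}}$, $J_n\in E$, $S_n\in\mathbb{N}^d$, $S_0=0_d$, $S_n<S_{n+1}$, with a.s. $\mathbb{P}(J_{n+1}=j,S_{n+1}-S_n=k\mid J_{0:n},S_{0:n})=q_{J_nj}(k)$, $q_{ij}(k)=\mathbb{P}(J_{n+1}=j,S_{n+1}-S_n=k\mid J_n=i)$ independent of $n$. $\mathbb{P}_i$: probability given $J_0=i$. With $m_j=\min\{l\ge1:J_l=j\}$, $g_{ij}(k)=\mathbb{P}_i(S_{m_j}=k)$, $k\in\mathbb{N}^d$. *)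

theory Defs
  imports "HOL-Probability.Probability"
begin

text \<open>Points of \<open>\<nat>^d\<close> are functions \<open>'d \<Rightarrow> nat\<close> for a finite index type \<open>'d\<close>
  (so \<open>d = CARD('d)\<close>); the componentwise order is the pointwise order on functions.
  The state space is \<open>E = {1..s}\<close>.\<close>

definition conv :: "(('d::finite \<Rightarrow> nat) \<Rightarrow> real) \<Rightarrow> (('d \<Rightarrow> nat) \<Rightarrow> real) \<Rightarrow> ('d \<Rightarrow> nat) \<Rightarrow> real" where
  "conv a b k = (\<Sum>(l, l') \<in> {(l, l'). (\<lambda>x. l x + l' x) = k}. a l * b l')"

text \<open>The a.s. conditional
  probability condition is written out for the discrete (countably-valued) history.\<close>

definition mrc :: "'a measure \<Rightarrow> nat \<Rightarrow> (nat \<Rightarrow> nat \<Rightarrow> ('d::finite \<Rightarrow> nat) \<Rightarrow> real)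
    \<Rightarrow> (nat \<Rightarrow> 'a \<Rightarrow> nat) \<Rightarrow> (nat \<Rightarrow> 'a \<Rightarrow> 'd \<Rightarrow> nat) \<Rightarrow> bool" where
  "mrc M s q J S \<longleftrightarrow>
     prob_space M \<and>
     (\<forall>n. J n \<in> M \<rightarrow>\<^sub>M count_space UNIV) \<and>
     (\<forall>n. S n \<in> M \<rightarrow>\<^sub>M count_space UNIV) \<and>
     (\<forall>n. \<forall>\<omega>\<in>space M. J n \<omega> \<in> {1..s}) \<and>
     (\<forall>\<omega>\<in>space M. S 0 \<omega> = (\<lambda>_. 0)) \<and>
     (\<forall>n. \<forall>\<omega>\<in>space M. S n \<omega> < S (Suc n) \<omega>) \<and>
     (\<forall>n (is :: nat \<Rightarrow> nat) (ts :: nat \<Rightarrow> 'd \<Rightarrow> nat) j k.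
        measure M {\<omega>\<in>space M. (\<forall>l\<le>n. J l \<omega> = is l \<and> S l \<omega> = ts l)
                      \<and> J (Suc n) \<omega> = j \<and> S (Suc n) \<omega> = (\<lambda>x. ts n x + k x)}
        = q (is n) j k * measure M {\<omega>\<in>space M. \<forall>l\<le>n. J l \<omega> = is l \<and> S l \<omega> = ts l})"

definition first_passage :: "'a measure \<Rightarrow> (nat \<Rightarrow> 'a \<Rightarrow> nat) \<Rightarrow> (nat \<Rightarrow> 'a \<Rightarrow> 'd \<Rightarrow> nat)
    \<Rightarrow> nat \<Rightarrow> ('d \<Rightarrow> nat) \<Rightarrow> real" where
  "first_passage M J S j k = measure M {\<omega>\<in>space M. (\<exists>l\<ge>1. J l \<omega> = j) \<and>
       S (LEAST l. l \<ge> 1 \<and> J l \<omega> = j) \<omega> = k}"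

end

theory Submission
  imports Defs
begin

(* First-step analysis.  Split the first-passage event according to the first jump (J_1, S_1).
   If J_1 = j, the passage happens at the first jump, which contributes q_ij(k).  Otherwise, on
   {J_0 = i, J_1 = r, S_1 = l} the chain after the first jump, (J_(n+1), S_(n+1) - S_1), is
   distributed like the chain started at r, up to the factor q_ir(l).  Cylinder probabilities are
   products of kernel values, so this holds for every finite path prefix; since prefixes take
   countably many values it holds for every event determined by a prefix, and by countable
   additivity over the hitting step also for the first-passage event.  Summing over r <> j and
   over the splittings l + l' = k of the passage time gives the convolution. *)

lemma measure_vimage_eq_scaled_countable:
  fixes X :: "'a \<Rightarrow> 'c::countable" and Y :: "'b \<Rightarrow> 'c"
  assumes "finite_measure M" "finite_measure N"
    and [measurable]: "X \<in> M \<rightarrow>\<^sub>M count_space UNIV" "Y \<in> N \<rightarrow>\<^sub>M count_space UNIV" "B \<in> sets M"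
    and "c \<ge> 0"
    and singleton: "\<And>a. measure M ({\<omega>\<in>space M. X \<omega> = a} \<inter> B) = c * measure N {\<omega>\<in>space N. Y \<omega> = a}"
  shows "measure M ({\<omega>\<in>space M. X \<omega> \<in> A} \<inter> B) = c * measure N {\<omega>\<in>space N. Y \<omega> \<in> A}"
proof -
  interpret M: finite_measure M by fact
  interpret N: finite_measure N by fact
  have "{\<omega>\<in>space M. X \<omega> \<in> A} \<inter> B = (\<Union>a\<in>A. {\<omega>\<in>space M. X \<omega> = a} \<inter> B)"
    "{\<omega>\<in>space N. Y \<omega> \<in> A} = (\<Union>a\<in>A. {\<omega>\<in>space N. Y \<omega> = a})"
    by auto
  moreover have "emeasure M (\<Union>a\<in>A. {\<omega>\<in>space M. X \<omega> = a} \<inter> B)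
      = (\<integral>\<^sup>+a. emeasure M ({\<omega>\<in>space M. X \<omega> = a} \<inter> B) \<partial>count_space A)"
    by (rule emeasure_UN_countable) (auto simp: disjoint_family_on_def)
  moreover have "emeasure N (\<Union>a\<in>A. {\<omega>\<in>space N. Y \<omega> = a})
      = (\<integral>\<^sup>+a. emeasure N {\<omega>\<in>space N. Y \<omega> = a} \<partial>count_space A)"
    by (rule emeasure_UN_countable) (auto simp: disjoint_family_on_def)
  moreover have "emeasure M ({\<omega>\<in>space M. X \<omega> = a} \<inter> B) = c * emeasure N {\<omega>\<in>space N. Y \<omega> = a}" for a
    using singleton[of a] \<open>c \<ge> 0\<close> by (simp add: M.emeasure_eq_measure N.emeasure_eq_measure ennreal_mult)
  ultimately have "emeasure M ({\<omega>\<in>space M. X \<omega> \<in> A} \<inter> B) = c * emeasure N {\<omega>\<in>space N. Y \<omega> \<in> A}"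
    by (simp only:) (simp add: nn_integral_cmult)
  then show ?thesis
    using \<open>c \<ge> 0\<close> by (simp add: M.emeasure_eq_measure N.emeasure_eq_measure ennreal_mult[symmetric])
qed

lemma measure_UN_eq_scaled:
  fixes A :: "nat \<Rightarrow> 'a set" and B :: "nat \<Rightarrow> 'b set"
  assumes "finite_measure M" "finite_measure N"
    and "range A \<subseteq> sets M" "range B \<subseteq> sets N" "disjoint_family A" "disjoint_family B"
    and "\<And>n. measure M (A n) = c * measure N (B n)"
  shows "measure M (\<Union>n. A n) = c * measure N (\<Union>n. B n)"
proof -
  have "(\<lambda>n. measure M (A n)) sums measure M (\<Union>n. A n)"
    using assms by (intro finite_measure.finite_measure_UNION) auto
  moreover have "(\<lambda>n. measure M (A n)) sums (c * measure N (\<Union>n. B n))"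
    unfolding assms(7) using assms by (intro sums_mult finite_measure.finite_measure_UNION) auto
  ultimately show ?thesis
    by (rule sums_unique2)
qed

lemma all_le_Suc_conv: "(\<forall>m\<le>Suc n. P m) \<longleftrightarrow> P 0 \<and> (\<forall>m\<le>n. P (Suc m))"
  by (metis Suc_le_mono less_eq_nat.simps(1) old.nat.exhaust)

definition cylinder :: "'a measure \<Rightarrow> (nat \<Rightarrow> 'a \<Rightarrow> 'b) \<Rightarrow> (nat \<Rightarrow> 'a \<Rightarrow> 'c) \<Rightarrow> nat
    \<Rightarrow> (nat \<Rightarrow> 'b) \<Rightarrow> (nat \<Rightarrow> 'c) \<Rightarrow> 'a set" where
  "cylinder M J S n is ts = {\<omega>\<in>space M. \<forall>m\<le>n. J m \<omega> = is m \<and> S m \<omega> = ts m}"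

lemma cylinder_0: "cylinder M J S 0 is ts = {\<omega>\<in>space M. J 0 \<omega> = is 0 \<and> S 0 \<omega> = ts 0}"
  by (simp add: cylinder_def)

lemma cylinder_Suc: "cylinder M J S (Suc n) is ts =
    {\<omega>\<in>cylinder M J S n is ts. J (Suc n) \<omega> = is (Suc n) \<and> S (Suc n) \<omega> = ts (Suc n)}"
  by (auto simp: cylinder_def le_Suc_eq)

definition path_prob :: "(nat \<Rightarrow> nat \<Rightarrow> ('d \<Rightarrow> nat) \<Rightarrow> real) \<Rightarrow> nat \<Rightarrow> (nat \<Rightarrow> nat)
    \<Rightarrow> (nat \<Rightarrow> 'd \<Rightarrow> nat) \<Rightarrow> real" where
  "path_prob q n is ts = (\<Prod>m<n. if ts m \<le> ts (Suc m)
     then q (is m) (is (Suc m)) (\<lambda>x. ts (Suc m) x - ts m x) else 0)"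

lemma path_prob_Suc_case_nat:
  assumes "ts 0 = (\<lambda>_. 0)"
  shows "path_prob q (Suc n) (case_nat i is) (case_nat (\<lambda>_. 0) (\<lambda>m x. l x + ts m x))
    = q i (is 0) l * path_prob q n is ts"
  using assms unfolding path_prob_def prod.lessThan_Suc_shift by (simp add: le_fun_def cong: if_cong)

definition shift_states :: "(nat \<Rightarrow> 'a \<Rightarrow> 'b) \<Rightarrow> nat \<Rightarrow> 'a \<Rightarrow> 'b" where
  "shift_states J m = J (Suc m)"

(* The truncated subtraction is harmless: S 1 <= S (Suc m) along every path of the chain. *)
definition shift_times :: "(nat \<Rightarrow> 'a \<Rightarrow> 'd \<Rightarrow> nat) \<Rightarrow> nat \<Rightarrow> 'a \<Rightarrow> 'd \<Rightarrow> nat" where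
  "shift_times S m \<omega> = (\<lambda>x. S (Suc m) \<omega> x - S 1 \<omega> x)"

definition path_prefix :: "(nat \<Rightarrow> 'a \<Rightarrow> 'b) \<Rightarrow> (nat \<Rightarrow> 'a \<Rightarrow> 'c) \<Rightarrow> nat \<Rightarrow> 'a \<Rightarrow> ('b \<times> 'c) list" where
  "path_prefix J S n \<omega> = map (\<lambda>m. (J m \<omega>, S m \<omega>)) [0..<Suc n]"

lemma path_prefix_eq_iff:
  "path_prefix J S n \<omega> = a \<longleftrightarrow>
     length a = Suc n \<and> (\<forall>m\<le>n. J m \<omega> = fst (a ! m) \<and> S m \<omega> = snd (a ! m))"
  unfolding path_prefix_def by (auto simp: list_eq_iff_nth_eq less_Suc_eq_le prod_eq_iff simp del: upt_Suc)

lemma path_prefix_vimage_singleton: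
  "{\<omega>\<in>space M. path_prefix J S n \<omega> = a} =
     (if length a = Suc n then cylinder M J S n (\<lambda>m. fst (a ! m)) (\<lambda>m. snd (a ! m)) else {})"
  by (auto simp: path_prefix_eq_iff cylinder_def)

lemma measurable_path_prefix [measurable]:
  fixes J :: "nat \<Rightarrow> 'a \<Rightarrow> 'b::countable" and S :: "nat \<Rightarrow> 'a \<Rightarrow> 'c::countable"
  assumes [measurable]: "\<And>m. J m \<in> M \<rightarrow>\<^sub>M count_space UNIV" "\<And>m. S m \<in> M \<rightarrow>\<^sub>M count_space UNIV"
  shows "path_prefix J S n \<in> M \<rightarrow>\<^sub>M count_space UNIV"
proof -
  have "path_prefix J S n -` {a} \<inter> space M \<in> sets M" for a
    using path_prefix_vimage_singleton[of M J S n a] unfolding cylinder_def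
    by (simp add: Int_def conj_commute) measurable
  then show ?thesis
    by (simp add: measurable_count_space_eq2_countable)
qed

definition first_hit :: "(nat \<Rightarrow> 'a \<Rightarrow> 'b) \<Rightarrow> (nat \<Rightarrow> 'a \<Rightarrow> 'c) \<Rightarrow> 'b \<Rightarrow> nat \<Rightarrow> 'c \<Rightarrow> 'a \<Rightarrow> bool" where
  "first_hit J S j n k \<omega> \<longleftrightarrow>
     1 \<le> n \<and> (\<forall>m. 1 \<le> m \<and> m < n \<longrightarrow> J m \<omega> \<noteq> j) \<and> J n \<omega> = j \<and> S n \<omega> = k"

lemma first_hit_unique: "first_hit J S j n k \<omega> \<Longrightarrow> first_hit J S j n' k' \<omega> \<Longrightarrow> n = n'"
  unfolding first_hit_def by (metis linorder_neqE_nat)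

definition first_hit_prefixes :: "'b \<Rightarrow> nat \<Rightarrow> 'c \<Rightarrow> ('b \<times> 'c) list set" where
  "first_hit_prefixes j n k = {a. first_hit (\<lambda>m a. fst (a ! m)) (\<lambda>m a. snd (a ! m)) j n k a}"

lemma first_hit_iff_path_prefix:
  "first_hit J S j n k \<omega> \<longleftrightarrow> path_prefix J S n \<omega> \<in> first_hit_prefixes j n k"
  unfolding first_hit_prefixes_def first_hit_def path_prefix_def by (simp add: nth_map del: upt_Suc)

lemma sets_first_hit:
  fixes J :: "nat \<Rightarrow> 'a \<Rightarrow> 'b::countable" and S :: "nat \<Rightarrow> 'a \<Rightarrow> 'c::countable"
  assumes "\<And>m. J m \<in> M \<rightarrow>\<^sub>M count_space UNIV" "\<And>m. S m \<in> M \<rightarrow>\<^sub>M count_space UNIV"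
  shows "{\<omega>\<in>space M. first_hit J S j n k \<omega>} \<in> sets M"
  using measurable_sets[OF measurable_path_prefix[OF assms], of "first_hit_prefixes j n k"]
  by (simp add: first_hit_iff_path_prefix vimage_def Int_def conj_commute)

lemma sets_ex_first_hit:
  fixes J :: "nat \<Rightarrow> 'a \<Rightarrow> 'b::countable" and S :: "nat \<Rightarrow> 'a \<Rightarrow> 'c::countable"
  assumes "\<And>m. J m \<in> M \<rightarrow>\<^sub>M count_space UNIV" "\<And>m. S m \<in> M \<rightarrow>\<^sub>M count_space UNIV"
  shows "{\<omega>\<in>space M. \<exists>n. first_hit J S j n k \<omega>} \<in> sets M"
  using sets_first_hit[OF assms] by (auto simp flip: Collect_ex_eq)

lemma first_passage_eq_first_hit:
  "first_passage M J S j k = measure M {\<omega>\<in>space M. \<exists>n. first_hit J S j n k \<omega>}"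
proof -
  have "(\<exists>n\<ge>1. J n \<omega> = j) \<and> S (LEAST n. n \<ge> 1 \<and> J n \<omega> = j) \<omega> = k \<longleftrightarrow> (\<exists>n. first_hit J S j n k \<omega>)"
    for \<omega>
  proof
    assume hit: "(\<exists>n\<ge>1. J n \<omega> = j) \<and> S (LEAST n. n \<ge> 1 \<and> J n \<omega> = j) \<omega> = k"
    let ?n = "LEAST n. n \<ge> 1 \<and> J n \<omega> = j"
    have "?n \<ge> 1 \<and> J ?n \<omega> = j"
      using hit by (metis (mono_tags, lifting) LeastI)
    moreover have "J m \<omega> \<noteq> j" if "1 \<le> m" "m < ?n" for m
      using not_less_Least[OF that(2)] that(1) by blast
    ultimately have "first_hit J S j ?n k \<omega>"
      using hit by (simp add: first_hit_def)
    then show "\<exists>n. first_hit J S j n k \<omega>" ..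
  next
    assume "\<exists>n. first_hit J S j n k \<omega>"
    then obtain n where n: "first_hit J S j n k \<omega>" ..
    then have "(LEAST n. n \<ge> 1 \<and> J n \<omega> = j) = n"
      unfolding first_hit_def by (intro Least_equality) (auto simp: not_less[symmetric])
    with n show "(\<exists>n\<ge>1. J n \<omega> = j) \<and> S (LEAST n. n \<ge> 1 \<and> J n \<omega> = j) \<omega> = k"
      unfolding first_hit_def by auto
  qed
  then show ?thesis
    unfolding first_passage_def by simp
qed

lemma first_hit_Suc_iff_shift:
  fixes S :: "nat \<Rightarrow> 'a \<Rightarrow> 'd \<Rightarrow> nat"
  assumes "n \<ge> 1" and "S 1 \<omega> \<le> S (Suc n) \<omega>"
  shows "first_hit J S j (Suc n) k \<omega> \<longleftrightarrow> J 1 \<omega> \<noteq> j \<and> (\<lambda>x. S 1 \<omega> x + shift_times S n \<omega> x) = k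
      \<and> first_hit (shift_states J) (shift_times S) j n (shift_times S n \<omega>) \<omega>"
proof -
  have "(\<lambda>x. S 1 \<omega> x + shift_times S n \<omega> x) = S (Suc n) \<omega>"
    using assms(2) by (auto simp: shift_times_def le_fun_def)
  moreover have "(\<forall>m. 1 \<le> m \<and> m < Suc n \<longrightarrow> J m \<omega> \<noteq> j) \<longleftrightarrow>
      J 1 \<omega> \<noteq> j \<and> (\<forall>m. 1 \<le> m \<and> m < n \<longrightarrow> J (Suc m) \<omega> \<noteq> j)" (is "?lhs \<longleftrightarrow> ?rhs")
  proof
    assume ?lhs
    then show ?rhs
      using assms(1) by auto
  next
    assume ?rhs
    show ?lhs
    proof (intro allI impI)
      fix m
      assume m: "1 \<le> m \<and> m < Suc n"
      show "J m \<omega> \<noteq> j"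
      proof (cases "m = 1")
        case False
        then have "1 \<le> m - 1" "m - 1 < n" "Suc (m - 1) = m"
          using m by auto
        then show ?thesis
          using \<open>?rhs\<close> by metis
      qed (use \<open>?rhs\<close> in simp)
    qed
  qed
  ultimately show ?thesis
    using assms(1) by (auto simp: first_hit_def shift_states_def)
qed

lemma ex_first_hit_iff_first_step:
  fixes S :: "nat \<Rightarrow> 'a \<Rightarrow> 'd \<Rightarrow> nat"
  assumes mono: "\<And>m. 1 \<le> m \<Longrightarrow> S 1 \<omega> \<le> S m \<omega>"
  shows "(\<exists>n. first_hit J S j n k \<omega>) \<longleftrightarrow> (J 1 \<omega> = j \<and> S 1 \<omega> = k) \<or>
     (J 1 \<omega> \<noteq> j \<and> (\<exists>l'. (\<lambda>x. S 1 \<omega> x + l' x) = k \<and>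
        (\<exists>n. first_hit (shift_states J) (shift_times S) j n l' \<omega>)))" (is "_ \<longleftrightarrow> ?first \<or> ?later")
proof
  assume "\<exists>n. first_hit J S j n k \<omega>"
  then obtain n where hit: "first_hit J S j n k \<omega>" ..
  show "?first \<or> ?later"
  proof (cases "n = 1")
    case True
    then show ?thesis
      using hit by (simp add: first_hit_def)
  next
    case False
    moreover have "n \<ge> 1"
      using hit by (simp add: first_hit_def)
    ultimately obtain n' where n': "n = Suc n'" "n' \<ge> 1"
      by (intro that[of "n - 1"]) auto
    then have "J 1 \<omega> \<noteq> j \<and> (\<lambda>x. S 1 \<omega> x + shift_times S n' \<omega> x) = k
        \<and> first_hit (shift_states J) (shift_times S) j n' (shift_times S n' \<omega>) \<omega>"
      using hit n'(1) first_hit_Suc_iff_shift[OF n'(2), of S \<omega> J j k] mono[of "Suc n'"] by simp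
    then show ?thesis
      by blast
  qed
next
  assume "?first \<or> ?later"
  then show "\<exists>n. first_hit J S j n k \<omega>"
  proof
    assume ?first
    then have "first_hit J S j 1 k \<omega>"
      by (simp add: first_hit_def)
    then show ?thesis ..
  next
    assume ?later
    then obtain l' n where "J 1 \<omega> \<noteq> j" "(\<lambda>x. S 1 \<omega> x + l' x) = k"
      and hit: "first_hit (shift_states J) (shift_times S) j n l' \<omega>"
      by blast
    moreover have "n \<ge> 1" "shift_times S n \<omega> = l'"
      using hit by (simp_all add: first_hit_def)
    ultimately have "first_hit J S j (Suc n) k \<omega>"
      using first_hit_Suc_iff_shift[of n S \<omega> J j k] mono[of "Suc n"] by simp
    then show ?thesis ..
  qed
qed

definition splittings :: "('d \<Rightarrow> nat) \<Rightarrow> (('d \<Rightarrow> nat) \<times> ('d \<Rightarrow> nat)) set" where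
  "splittings k = {(l, l'). (\<lambda>x. l x + l' x) = k}"

lemma finite_splittings: "finite (splittings (k :: 'd::finite \<Rightarrow> nat))"
proof (rule finite_subset)
  show "splittings k \<subseteq> (\<Pi>\<^sub>E x\<in>UNIV. {..k x}) \<times> (\<Pi>\<^sub>E x\<in>UNIV. {..k x})"
    by (auto simp: splittings_def)
qed (simp add: finite_PiE)

lemma conv_eq_sum_splittings: "conv a b k = (\<Sum>(l, l')\<in>splittings k. a l * b l')"
  by (simp add: conv_def splittings_def)

(* The paper's P_i: a chain started in state i almost surely. *)
locale mrc_from =
  fixes M :: "'a measure" and s :: nat and q :: "nat \<Rightarrow> nat \<Rightarrow> ('d::finite \<Rightarrow> nat) \<Rightarrow> real"
    and J :: "nat \<Rightarrow> 'a \<Rightarrow> nat" and S :: "nat \<Rightarrow> 'a \<Rightarrow> 'd \<Rightarrow> nat" and i :: nat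
  assumes mrc: "mrc M s q J S" and start: "AE \<omega> in M. J 0 \<omega> = i"
begin

sublocale prob_space M
  using mrc by (simp add: mrc_def)

lemma measurable_J [measurable]: "J n \<in> M \<rightarrow>\<^sub>M count_space UNIV"
  and measurable_S [measurable]: "S n \<in> M \<rightarrow>\<^sub>M count_space UNIV"
  using mrc by (simp_all add: mrc_def)

lemma J_range: "\<omega> \<in> space M \<Longrightarrow> J n \<omega> \<in> {1..s}"
  and S_0: "\<omega> \<in> space M \<Longrightarrow> S 0 \<omega> = (\<lambda>_. 0)"
  and S_less_S_Suc: "\<omega> \<in> space M \<Longrightarrow> S n \<omega> < S (Suc n) \<omega>"
  using mrc by (simp_all add: mrc_def)

lemma S_mono:
  assumes "\<omega> \<in> space M" "m \<le> m'"
  shows "S m \<omega> \<le> S m' \<omega>"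
  using assms(2)
  by (induction m' rule: dec_induct) (use assms(1) S_less_S_Suc in \<open>auto intro: order_trans less_imp_le\<close>)

lemma measure_cylinder_Suc_kernel:
  "measure M {\<omega>\<in>cylinder M J S n is ts. J (Suc n) \<omega> = j \<and> S (Suc n) \<omega> = (\<lambda>x. ts n x + k x)}
     = q (is n) j k * measure M (cylinder M J S n is ts)"
  using mrc unfolding mrc_def cylinder_def by (simp add: conj_assoc)

abbreviation first_jump :: "nat \<Rightarrow> ('d \<Rightarrow> nat) \<Rightarrow> 'a set" where
  "first_jump r l \<equiv> {\<omega>\<in>space M. J 0 \<omega> = i \<and> J 1 \<omega> = r \<and> S 1 \<omega> = l}"

lemma measure_cylinder:
  "measure M (cylinder M J S n is ts) =
     (if is 0 = i \<and> ts 0 = (\<lambda>_. 0) then path_prob q n is ts else 0)"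
proof (induction n)
  case 0
  show ?case
  proof (cases "is 0 = i \<and> ts 0 = (\<lambda>_. 0)")
    case True
    from AE_space start have "AE \<omega> in M. J 0 \<omega> = is 0 \<and> S 0 \<omega> = ts 0"
      by eventually_elim (use True in \<open>auto simp: S_0\<close>)
    then have "prob (cylinder M J S 0 is ts) = 1"
      unfolding cylinder_0 by (subst prob_Collect_eq_1) measurable
    then show ?thesis
      using True by (simp add: path_prob_def)
  next
    case False
    from AE_space start have "AE \<omega> in M. \<not> (J 0 \<omega> = is 0 \<and> S 0 \<omega> = ts 0)"
      by eventually_elim (use False in \<open>auto simp: S_0\<close>)
    then have "prob (cylinder M J S 0 is ts) = 0"
      unfolding cylinder_0 by (subst prob_Collect_eq_0) measurable
    then show ?thesis
      by (simp only: if_not_P[OF False])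
  qed
next
  case (Suc n)
  show ?case
  proof (cases "ts n \<le> ts (Suc n)")
    case True
    then have "(\<lambda>x. ts n x + (ts (Suc n) x - ts n x)) = ts (Suc n)"
      by (auto simp: le_fun_def)
    then have "measure M (cylinder M J S (Suc n) is ts)
        = q (is n) (is (Suc n)) (\<lambda>x. ts (Suc n) x - ts n x) * measure M (cylinder M J S n is ts)"
      using measure_cylinder_Suc_kernel[of n "is" ts "is (Suc n)" "\<lambda>x. ts (Suc n) x - ts n x"]
      by (simp only: cylinder_Suc)
    then show ?thesis
      using True by (simp add: Suc path_prob_def)
  next
    case False
    have "cylinder M J S (Suc n) is ts = {}"
    proof (intro equals0I)
      fix \<omega>
      assume "\<omega> \<in> cylinder M J S (Suc n) is ts"
      then have "\<omega> \<in> space M" "S n \<omega> = ts n" "S (Suc n) \<omega> = ts (Suc n)"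
        by (auto simp: cylinder_def)
      then show False
        using False S_less_S_Suc[of \<omega> n] by simp
    qed
    then show ?thesis
      using False by (simp add: path_prob_def)
  qed
qed

lemma measure_first_jump: "measure M (first_jump r l) = q i r l"
proof -
  define "is" where "is = case_nat i (\<lambda>_. r)"
  define ts where "ts = case_nat (\<lambda>_::'d. 0::nat) (\<lambda>_. l)"
  have "cylinder M J S 1 is ts = first_jump r l"
    by (auto simp: cylinder_def is_def ts_def le_Suc_eq S_0)
  moreover have "path_prob q 1 is ts = q i r l"
    by (simp add: path_prob_def is_def ts_def le_fun_def)
  ultimately show ?thesis
    using measure_cylinder[of 1 "is" ts] by (simp add: is_def ts_def)
qed

lemma kernel_nonneg: "q i r l \<ge> 0"
  using measure_first_jump[symmetric] by simp

lemma measure_cylinder_shift: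
  assumes "mrc_from M' s q J' S' r"
  shows "measure M (cylinder M (shift_states J) (shift_times S) n is ts \<inter> first_jump r l)
    = q i r l * measure M' (cylinder M' J' S' n is ts)"
(* Markov property at the first jump: the event is a cylinder of the chain itself, whose
   probability factors off the first step. *)
proof (cases "is 0 = r \<and> ts 0 = (\<lambda>_. 0)")
  case True
  let ?is = "case_nat i is" and ?ts = "case_nat (\<lambda>_. 0) (\<lambda>m x. l x + ts m x)"
  have "cylinder M (shift_states J) (shift_times S) n is ts \<inter> first_jump r l
      = cylinder M J S (Suc n) ?is ?ts" (is "?lhs = ?rhs")
  proof (intro set_eqI iffI)
    fix \<omega>
    assume "\<omega> \<in> ?lhs"
    then have \<omega>: "\<omega> \<in> space M" "J 0 \<omega> = i" "S 1 \<omega> = l"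
      and hd: "\<And>m. m \<le> n \<Longrightarrow> J (Suc m) \<omega> = is m \<and> (\<lambda>x. S (Suc m) \<omega> x - l x) = ts m"
      by (auto simp: cylinder_def shift_states_def shift_times_def)
    have "S (Suc m) \<omega> x = l x + ts m x" if "m \<le> n" for m x
      using fun_cong[OF conjunct2[OF hd[OF that]], of x] le_funD[OF S_mono[OF \<omega>(1), of 1 "Suc m"], of x] \<omega>(3)
      by simp
    then show "\<omega> \<in> ?rhs"
      using \<omega> hd by (auto simp: cylinder_def all_le_Suc_conv S_0)
  next
    fix \<omega>
    assume "\<omega> \<in> ?rhs"
    then have "\<omega> \<in> space M" "J 0 \<omega> = i"
      and hd: "\<forall>m\<le>n. J (Suc m) \<omega> = is m \<and> S (Suc m) \<omega> = (\<lambda>x. l x + ts m x)"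
      by (auto simp: cylinder_def all_le_Suc_conv)
    moreover from hd True have "S 1 \<omega> = l" "J 1 \<omega> = r"
      by auto
    ultimately show "\<omega> \<in> ?lhs"
      by (auto simp: cylinder_def shift_states_def shift_times_def)
  qed
  moreover have "measure M (cylinder M J S (Suc n) ?is ?ts) = q i r l * path_prob q n is ts"
    using True by (simp add: measure_cylinder path_prob_Suc_case_nat)
  moreover have "measure M' (cylinder M' J' S' n is ts) = path_prob q n is ts"
    using True mrc_from.measure_cylinder[OF assms] by simp
  ultimately show ?thesis
    by simp
next
  case False
  then have "cylinder M (shift_states J) (shift_times S) n is ts \<inter> first_jump r l = {}"
    by (auto simp: cylinder_def shift_states_def shift_times_def)
  moreover have "measure M' (cylinder M' J' S' n is ts) = 0"
    using False mrc_from.measure_cylinder[OF assms] by (simp only: if_not_P[OF False] if_False)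
  ultimately show ?thesis
    by (metis measure_empty mult_zero_right)
qed

lemma measurable_shift_states [measurable]: "shift_states J n \<in> M \<rightarrow>\<^sub>M count_space UNIV"
  by (simp add: shift_states_def)

lemma measurable_shift_times [measurable]: "shift_times S n \<in> M \<rightarrow>\<^sub>M count_space UNIV"
  unfolding shift_times_def
  by (rule measurable_compose_countable[where g="S 1"]) (auto intro: measurable_compose[OF measurable_S])

lemma measure_path_prefix_shift:
  assumes "mrc_from M' s q J' S' r"
  shows "measure M ({\<omega>\<in>space M. path_prefix (shift_states J) (shift_times S) n \<omega> \<in> A}
        \<inter> first_jump r l)
    = q i r l * measure M' {\<omega>\<in>space M'. path_prefix J' S' n \<omega> \<in> A}"
proof (rule measure_vimage_eq_scaled_countable)
  interpret M': mrc_from M' s q J' S' r by fact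
  show "finite_measure M" "finite_measure M'"
    by unfold_locales
  show "path_prefix (shift_states J) (shift_times S) n \<in> M \<rightarrow>\<^sub>M count_space UNIV"
    "path_prefix J' S' n \<in> M' \<rightarrow>\<^sub>M count_space UNIV" "first_jump r l \<in> sets M"
    by measurable
  show "q i r l \<ge> 0"
    by (rule kernel_nonneg)
  fix a
  show "measure M ({\<omega>\<in>space M. path_prefix (shift_states J) (shift_times S) n \<omega> = a}
        \<inter> first_jump r l)
    = q i r l * measure M' {\<omega>\<in>space M'. path_prefix J' S' n \<omega> = a}"
    using measure_cylinder_shift[OF assms] by (simp add: path_prefix_vimage_singleton)
qed

lemma measure_first_passage_shift:
  assumes "mrc_from M' s q J' S' r"
  shows "measure M ({\<omega>\<in>space M. \<exists>n. first_hit (shift_states J) (shift_times S) j n k \<omega>} \<inter> first_jump r l)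
    = q i r l * first_passage M' J' S' j k"
proof -
  interpret M': mrc_from M' s q J' S' r by fact
  let ?A = "\<lambda>n. {\<omega>\<in>space M. first_hit (shift_states J) (shift_times S) j n k \<omega>} \<inter> first_jump r l"
  let ?B = "\<lambda>n. {\<omega>\<in>space M'. first_hit J' S' j n k \<omega>}"
  have "measure M (\<Union>n. ?A n) = q i r l * measure M' (\<Union>n. ?B n)"
  proof (rule measure_UN_eq_scaled)
    show "finite_measure M" "finite_measure M'"
      by unfold_locales
    show "range ?A \<subseteq> sets M" "range ?B \<subseteq> sets M'"
      using sets_first_hit[of "shift_states J" M "shift_times S"] sets_first_hit[of J' M' S'] by auto
    show "disjoint_family ?A" "disjoint_family ?B"
      by (auto simp: disjoint_family_on_def dest: first_hit_unique)
    show "measure M (?A n) = q i r l * measure M' (?B n)" for n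
      unfolding first_hit_iff_path_prefix by (rule measure_path_prefix_shift[OF assms])
  qed
  moreover have "(\<Union>n. ?A n) =
      {\<omega>\<in>space M. \<exists>n. first_hit (shift_states J) (shift_times S) j n k \<omega>} \<inter> first_jump r l"
    "(\<Union>n. ?B n) = {\<omega>\<in>space M'. \<exists>n. first_hit J' S' j n k \<omega>}"
    by auto
  ultimately show ?thesis
    by (simp add: first_passage_eq_first_hit)
qed

lemma first_passage_event_split:
  "{\<omega>\<in>space M. J 0 \<omega> = i \<and> (\<exists>n. first_hit J S j n k \<omega>)} = first_jump j k \<union>
     (\<Union>(r, l, l')\<in>({1..s} - {j}) \<times> splittings k.
        {\<omega>\<in>space M. \<exists>n. first_hit (shift_states J) (shift_times S) j n l' \<omega>} \<inter> first_jump r l)"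
    (is "?E = _")
proof (rule set_eqI)
  fix \<omega>
  show "\<omega> \<in> ?E \<longleftrightarrow> \<omega> \<in> first_jump j k \<union> (\<Union>(r, l, l')\<in>({1..s} - {j}) \<times> splittings k.
      {\<omega>\<in>space M. \<exists>n. first_hit (shift_states J) (shift_times S) j n l' \<omega>} \<inter> first_jump r l)"
  proof (cases "\<omega> \<in> space M")
    case True
    then have "S 1 \<omega> \<le> S m \<omega>" if "1 \<le> m" for m
      using that by (rule S_mono)
    then show ?thesis
      using ex_first_hit_iff_first_step[of S \<omega> J j k] J_range[OF True, of 1] True
      by (fastforce simp: splittings_def)
  qed auto
qed

lemma first_passage_first_step:
  "first_passage M J S j k = q i j k + (\<Sum>r\<in>{1..s} - {j}. \<Sum>(l, l')\<in>splittings k.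
      measure M ({\<omega>\<in>space M. \<exists>n. first_hit (shift_states J) (shift_times S) j n l' \<omega>} \<inter> first_jump r l))"
proof -
  define G where "G = (\<lambda>(r, l, l'). {\<omega>\<in>space M. \<exists>n. first_hit (shift_states J) (shift_times S) j n l' \<omega>}
    \<inter> first_jump r l)"
  let ?T = "({1..s} - {j}) \<times> splittings k"
  have sets_G: "G t \<in> sets M" for t
    using sets_ex_first_hit[of "shift_states J" M "shift_times S"] by (auto simp: G_def split: prod.splits)
  have "first_passage M J S j k = measure M {\<omega>\<in>space M. J 0 \<omega> = i \<and> (\<exists>n. first_hit J S j n k \<omega>)}"
    unfolding first_passage_eq_first_hit
    using start sets_ex_first_hit[of J M S] by (intro finite_measure_eq_AE) auto
  also have "\<dots> = measure M (first_jump j k \<union> (\<Union>t\<in>?T. G t))"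
    unfolding first_passage_event_split G_def ..
  also have "\<dots> = q i j k + (\<Sum>t\<in>?T. measure M (G t))"
  proof -
    have "disjoint_family_on G ?T"
      by (auto simp: disjoint_family_on_def G_def splittings_def fun_eq_iff) (metis add_left_cancel)
    then have "measure M (\<Union>t\<in>?T. G t) = (\<Sum>t\<in>?T. measure M (G t))"
      using sets_G by (intro finite_measure_finite_Union) (auto simp: finite_splittings)
    moreover have "first_jump j k \<inter> (\<Union>t\<in>?T. G t) = {}"
      by (auto simp: G_def)
    ultimately show ?thesis
      using sets_G measure_first_jump[of j k] by (subst finite_measure_Union) auto
  qed
  also have "(\<Sum>t\<in>?T. measure M (G t)) = (\<Sum>r\<in>{1..s} - {j}. \<Sum>(l, l')\<in>splittings k.
      measure M ({\<omega>\<in>space M. \<exists>n. first_hit (shift_states J) (shift_times S) j n l' \<omega>} \<inter> first_jump r l))"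
    by (auto simp: sum.Sigma finite_splittings G_def intro!: sum.cong split: prod.splits)
  finally show ?thesis .
qed

end

theorem proposition11:
  fixes s :: nat
    and q :: "nat \<Rightarrow> nat \<Rightarrow> ('d::finite \<Rightarrow> nat) \<Rightarrow> real"
    and M :: "nat \<Rightarrow> 'a measure"
    and J :: "nat \<Rightarrow> nat \<Rightarrow> 'a \<Rightarrow> nat"
    and S :: "nat \<Rightarrow> nat \<Rightarrow> 'a \<Rightarrow> 'd \<Rightarrow> nat"
  assumes chain: "\<And>i. i \<in> {1..s} \<Longrightarrow> mrc (M i) s q (J i) (S i)"
    and start: "\<And>i. i \<in> {1..s} \<Longrightarrow> AE \<omega> in M i. J i 0 \<omega> = i"
    and i: "i \<in> {1..s}" and j: "j \<in> {1..s}"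
  shows "first_passage (M i) (J i) (S i) j k =
           q i j k + (\<Sum>r \<in> {1..s} - {j}. conv (q i r) (first_passage (M r) (J r) (S r) j) k)"
proof -
  have chain_from: "mrc_from (M r) s q (J r) (S r) r" if "r \<in> {1..s}" for r
    using chain[OF that] start[OF that] by unfold_locales
  interpret mrc_from "M i" s q "J i" "S i" i
    by (rule chain_from[OF i])
  have "measure (M i) ({\<omega>\<in>space (M i). \<exists>n. first_hit (shift_states (J i)) (shift_times (S i)) j n l' \<omega>}
      \<inter> first_jump r l) = q i r l * first_passage (M r) (J r) (S r) j l'" if "r \<in> {1..s}" for r l l'
    by (rule measure_first_passage_shift[OF chain_from[OF that]])
  then show ?thesis
    by (simp add: first_passage_first_step conv_eq_sum_splittings)
qed

end
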